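(* Let $X$ be a locally compact, geodesically complete CAT(0)-space connected at infinity, and let $x_0,y\in X$, $y\neq x_0$. For every $K>0$ and $\varepsilon>0$ there exists $\delta>0$ such that for every $x_1\in B(x_0,\delta)$ with $|yx_1|=|yx_0|$, $$\partial_\infty(\operatorname{Shadow}_y(x_1))\subset\mathcal N_{y,K,\varepsilon}\big(\partial_\infty(\operatorname{Shadow}_y(x_0))\big).$$
   Context: For $y,z\in\overline X=X\cup\partial_\infty X$, $[yz]$ denotes a geodesic segment, ray or complete geodesic joining them; $\operatorname{Shadow}_y(x)=\{z\in\overline X:\ \text{there is }[yz]\text{ with }x\in[yz]\}$ and $\partial_\infty(\operatorname{Shadow}_y(x))=\operatorname{Shadow}_y(x)\cap\partial_\infty X$. For $\mathcal V\subset\partial_\infty X$, $\mathcal N_{y,K,\varepsilon}(\mathcal V)$ is the set of $\zeta\in\partial_\infty X$ for which there is $\xi\in\mathcal V$ with $|c(K)\,c_*(K)|<\varepsilon$, where $c=[y\xi]$ and $c_*=[y\zeta]$ are the arclength-parametrized rays from $y$. *)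

theory Defs
  imports "HOL-Analysis.Analysis"
begin

text \<open>The space X is the whole type 'a (a metric space).\<close>

definition geodesic_segment :: "(real \<Rightarrow> 'a::metric_space) \<Rightarrow> 'a \<Rightarrow> 'a \<Rightarrow> bool" where
  "geodesic_segment g a b \<longleftrightarrow> g 0 = a \<and> g (dist a b) = b \<and>
     (\<forall>s t. 0 \<le> s \<and> s \<le> dist a b \<and> 0 \<le> t \<and> t \<le> dist a b \<longrightarrow> dist (g s) (g t) = \<bar>s - t\<bar>)"

definition geodesic_ray :: "(real \<Rightarrow> 'a::metric_space) \<Rightarrow> bool" where
  "geodesic_ray c \<longleftrightarrow> (\<forall>s t. 0 \<le> s \<and> 0 \<le> t \<longrightarrow> dist (c s) (c t) = \<bar>s - t\<bar>)"

definition geodesic_line :: "(real \<Rightarrow> 'a::metric_space) \<Rightarrow> bool" where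
  "geodesic_line c \<longleftrightarrow> (\<forall>s t. dist (c s) (c t) = \<bar>s - t\<bar>)"

definition geodesic_space :: "'a::metric_space itself \<Rightarrow> bool" where
  "geodesic_space _ \<longleftrightarrow> (\<forall>a b::'a. \<exists>g. geodesic_segment g a b)"

text \<open>Correspondence between points of a geodesic triangle with sides g1 = [ab], g2 = [bc],
  g3 = [ca] and points of a Euclidean comparison triangle a' b' c' in the plane.\<close>
definition tri_cmp ::
  "'a::metric_space \<Rightarrow> 'a \<Rightarrow> 'a \<Rightarrow> (real \<Rightarrow> 'a) \<Rightarrow> (real \<Rightarrow> 'a) \<Rightarrow> (real \<Rightarrow> 'a)
   \<Rightarrow> complex \<Rightarrow> complex \<Rightarrow> complex \<Rightarrow> 'a \<Rightarrow> complex \<Rightarrow> bool" where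
  "tri_cmp a b c g1 g2 g3 a' b' c' p p' \<longleftrightarrow>
     (\<exists>s. 0 \<le> s \<and> s \<le> 1 \<and>
        ((p = g1 (s * dist a b) \<and> p' = a' + of_real s * (b' - a')) \<or>
         (p = g2 (s * dist b c) \<and> p' = b' + of_real s * (c' - b')) \<or>
         (p = g3 (s * dist c a) \<and> p' = c' + of_real s * (a' - c'))))"

definition CAT0_space :: "'a::metric_space itself \<Rightarrow> bool" where
  "CAT0_space T \<longleftrightarrow> complete (UNIV :: 'a set) \<and> geodesic_space T \<and>
     (\<forall>(a::'a) b c g1 g2 g3 a' b' c'.
        geodesic_segment g1 a b \<and> geodesic_segment g2 b c \<and> geodesic_segment g3 c a \<and>
        dist a' b' = dist a b \<and> dist b' c' = dist b c \<and> dist c' a' = dist c a \<longrightarrow>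
        (\<forall>p p' q q'. tri_cmp a b c g1 g2 g3 a' b' c' p p' \<and> tri_cmp a b c g1 g2 g3 a' b' c' q q'
            \<longrightarrow> dist p q \<le> dist p' q'))"

definition locally_compact_metric :: "'a::metric_space itself \<Rightarrow> bool" where
  "locally_compact_metric _ \<longleftrightarrow> (\<forall>x::'a. \<exists>r>0. compact (cball x r))"

definition geodesically_complete :: "'a::metric_space itself \<Rightarrow> bool" where
  "geodesically_complete _ \<longleftrightarrow>
     (\<forall>(g::real \<Rightarrow> 'a) a b. a \<noteq> b \<and> geodesic_segment g a b \<longrightarrow>
        (\<exists>c. geodesic_line c \<and> (\<forall>t. 0 \<le> t \<and> t \<le> dist a b \<longrightarrow> c t = g t)))"

definition connected_at_infinity :: "'a::metric_space itself \<Rightarrow> bool" where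
  "connected_at_infinity _ \<longleftrightarrow>
     (\<forall>C::'a set. compact C \<longrightarrow> (\<exists>D. compact D \<and> C \<subseteq> D \<and>
        (\<forall>x y. x \<notin> D \<and> y \<notin> D \<longrightarrow>
           (\<exists>p. path p \<and> pathstart p = x \<and> pathfinish p = y \<and> path_image p \<subseteq> - C))))"

definition asymptotic :: "(real \<Rightarrow> 'a::metric_space) \<Rightarrow> (real \<Rightarrow> 'a) \<Rightarrow> bool" where
  "asymptotic c d \<longleftrightarrow> (\<exists>B. \<forall>t\<ge>0. dist (c t) (d t) \<le> B)"

definition ray_class :: "(real \<Rightarrow> 'a::metric_space) \<Rightarrow> (real \<Rightarrow> 'a) set" where
  "ray_class c = {d. geodesic_ray d \<and> asymptotic c d}"

definition boundary_at_infinity :: "(real \<Rightarrow> 'a::metric_space) set set" where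
  "boundary_at_infinity = {ray_class c | c. geodesic_ray c}"

definition ray_from_to :: "'a::metric_space \<Rightarrow> (real \<Rightarrow> 'a) set \<Rightarrow> (real \<Rightarrow> 'a) \<Rightarrow> bool" where
  "ray_from_to y \<xi> c \<longleftrightarrow> geodesic_ray c \<and> c 0 = y \<and> c \<in> \<xi>"

definition boundary_shadow :: "'a::metric_space \<Rightarrow> 'a \<Rightarrow> (real \<Rightarrow> 'a) set set" where
  "boundary_shadow y x = {\<xi> \<in> boundary_at_infinity. \<exists>c. ray_from_to y \<xi> c \<and> (\<exists>t\<ge>0. c t = x)}"

definition ray_nbhd :: "'a::metric_space \<Rightarrow> real \<Rightarrow> real \<Rightarrow> (real \<Rightarrow> 'a) set set \<Rightarrow> (real \<Rightarrow> 'a) set set" where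
  "ray_nbhd y K \<epsilon> V = {\<zeta> \<in> boundary_at_infinity. \<exists>\<xi>\<in>V. \<exists>c c'.
       ray_from_to y \<xi> c \<and> ray_from_to y \<zeta> c' \<and> dist (c K) (c' K) < \<epsilon>}"

end

theory Submission
  imports Defs
begin

(*
  Put T = K + |y x0|. The ray from y through x1 meets the sphere S(y,T) in a point w with
  |y x0| + |x0 w| < T + |x0 x1|. As X is proper (Hopf-Rinow: complete, geodesic and locally
  compact), S(y,T) is compact, so such points w are uniformly close to points z of S(y,T) with
  |y z| = |y x0| + |x0 z|. Concatenating [y x0] with [x0 z] and extending by geodesic completeness
  gives a ray from y through x0 and z, and CAT(0) comparison for two rays issuing from y bounds
  their distance at time K by |z w|.
*)

lemma geodesic_segmentD:
  assumes "geodesic_segment g a b"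
  shows "g 0 = a" "g (dist a b) = b"
    and "\<And>s t. \<lbrakk>0 \<le> s; s \<le> dist a b; 0 \<le> t; t \<le> dist a b\<rbrakk> \<Longrightarrow> dist (g s) (g t) = \<bar>s - t\<bar>"
  using assms unfolding geodesic_segment_def by auto

lemma geodesic_ray_dist:
  "\<lbrakk>geodesic_ray c; 0 \<le> s; 0 \<le> t\<rbrakk> \<Longrightarrow> dist (c s) (c t) = \<bar>s - t\<bar>"
  unfolding geodesic_ray_def by blast

lemma geodesic_ray_imp_segment:
  assumes "geodesic_ray c" "0 \<le> T"
  shows "geodesic_segment c (c 0) (c T)"
proof -
  have "dist (c 0) (c T) = T"
    using geodesic_ray_dist[OF assms(1), of 0 T] assms(2) by simp
  then show ?thesis
    unfolding geodesic_segment_def using geodesic_ray_dist[OF assms(1)] by auto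
qed

lemma geodesic_segment_reverse:
  assumes "geodesic_segment g a b"
  shows "geodesic_segment (\<lambda>s. g (dist a b - s)) b a"
  using geodesic_segmentD[OF assms] unfolding geodesic_segment_def
  by (auto simp: dist_commute)

lemma dist_geodesic_segments_aligned:
  assumes g: "geodesic_segment g a b" and h: "geodesic_segment h b c"
    and abc: "dist a c = dist a b + dist b c"
    and "0 \<le> s" "s \<le> dist a b" "dist a b \<le> t" "t \<le> dist a c"
  shows "dist (g s) (h (t - dist a b)) = t - s"
proof (rule antisym)
  let ?D = "dist a b"
  have "dist (g s) (g ?D) = ?D - s" "dist (h 0) (h (t - ?D)) = t - ?D"
    using geodesic_segmentD(3)[OF g, of s ?D] geodesic_segmentD(3)[OF h, of 0 "t - ?D"] assms(4-7) abc
    by simp_all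
  then show "dist (g s) (h (t - ?D)) \<le> t - s"
    using dist_triangle[of "g s" "h (t - ?D)" b] geodesic_segmentD(2)[OF g] geodesic_segmentD(1)[OF h]
    by simp
  have "dist (g 0) (g s) = s" "dist (h (t - ?D)) (h (dist b c)) = dist a c - t"
    using geodesic_segmentD(3)[OF g, of 0 s] geodesic_segmentD(3)[OF h, of "t - ?D" "dist b c"]
      assms(4-7) abc by simp_all
  then have "dist a (g s) = s" "dist (h (t - ?D)) c = dist a c - t"
    using geodesic_segmentD(1)[OF g] geodesic_segmentD(2)[OF h] by simp_all
  moreover have "dist a c \<le> dist a (g s) + dist (g s) (h (t - ?D)) + dist (h (t - ?D)) c"
    using dist_triangle[of a c "g s"] dist_triangle[of "g s" c "h (t - ?D)"] by linarith
  ultimately show "t - s \<le> dist (g s) (h (t - ?D))"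
    by simp
qed

lemma geodesic_segment_append:
  assumes g: "geodesic_segment g a b" and h: "geodesic_segment h b c"
    and abc: "dist a c = dist a b + dist b c"
  shows "geodesic_segment (\<lambda>t. if t \<le> dist a b then g t else h (t - dist a b)) a c"
proof -
  let ?D = "dist a b"
  have endpoint: "(if dist a c \<le> ?D then g (dist a c) else h (dist a c - ?D)) = c"
  proof (cases "b = c")
    case True
    then show ?thesis using geodesic_segmentD(2)[OF g] by simp
  next
    case False
    then show ?thesis using geodesic_segmentD(2)[OF h] abc by simp
  qed
  show ?thesis
    unfolding geodesic_segment_def
  proof (intro conjI allI impI endpoint)
    show "(if 0 \<le> ?D then g 0 else h (0 - ?D)) = a"
      using geodesic_segmentD(1)[OF g] by simp
    fix s t assume st: "0 \<le> s \<and> s \<le> dist a c \<and> 0 \<le> t \<and> t \<le> dist a c"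
    show "dist (if s \<le> ?D then g s else h (s - ?D)) (if t \<le> ?D then g t else h (t - ?D))
        = \<bar>s - t\<bar>"
    proof (cases "s \<le> ?D"; cases "t \<le> ?D")
      assume "s \<le> ?D" "t \<le> ?D"
      then show ?thesis using geodesic_segmentD(3)[OF g, of s t] st by simp
    next
      assume "\<not> s \<le> ?D" "\<not> t \<le> ?D"
      then show ?thesis using geodesic_segmentD(3)[OF h, of "s - ?D" "t - ?D"] st abc by simp
    next
      assume "s \<le> ?D" "\<not> t \<le> ?D"
      then show ?thesis using dist_geodesic_segments_aligned[OF g h abc, of s t] st by simp
    next
      assume "\<not> s \<le> ?D" "t \<le> ?D"
      then show ?thesis using dist_geodesic_segments_aligned[OF g h abc, of t s] st
        by (simp add: dist_commute)
    qed
  qed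
qed

lemma geodesic_space_point_between:
  fixes y q :: "'a::metric_space"
  assumes "geodesic_space TYPE('a)" "0 \<le> a" "0 \<le> b" "dist y q \<le> a + b"
  shows "\<exists>p. dist y p \<le> a \<and> dist p q \<le> b"
proof (cases "dist y q \<le> a")
  case True
  then show ?thesis using assms(3) by (intro exI[of _ q]) simp
next
  case False
  obtain g where g: "geodesic_segment g y q"
    using assms(1) unfolding geodesic_space_def by blast
  have "dist (g 0) (g a) = a" "dist (g a) (g (dist y q)) = dist y q - a"
    using geodesic_segmentD(3)[OF g, of 0 a] geodesic_segmentD(3)[OF g, of a "dist y q"] False assms(2)
    by simp_all
  then show ?thesis
    using geodesic_segmentD(1,2)[OF g] assms(4) by (intro exI[of _ "g a"]) simp
qed

lemma compact_cball_from_smaller: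
  fixes y :: "'a::metric_space"
  assumes "complete (UNIV :: 'a set)" "geodesic_space TYPE('a)" "0 < R"
    and smaller: "\<And>r. r < R \<Longrightarrow> compact (cball y r)"
  shows "compact (cball y R)"
  unfolding compact_eq_totally_bounded
proof safe
  show "complete (cball y R)"
    using complete_closed_subset[OF closed_cball _ assms(1)] by simp
next
  fix e :: real assume "e > 0"
  define r where "r = max 0 (R - e/2)"
  have "compact (cball y r)"
    using smaller \<open>0 < R\<close> \<open>e > 0\<close> unfolding r_def by simp
  then obtain k where k: "finite k" "cball y r \<subseteq> (\<Union>x\<in>k. ball x (e/2))"
    using \<open>e > 0\<close> unfolding compact_eq_totally_bounded by (meson half_gt_zero)
  have "cball y R \<subseteq> (\<Union>x\<in>k. ball x e)"
  proof
    fix p assume "p \<in> cball y R"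
    moreover have "0 \<le> r" "R \<le> r + e/2"
      unfolding r_def by auto
    ultimately obtain q where q: "dist y q \<le> r" "dist q p \<le> e/2"
      using geodesic_space_point_between[OF assms(2), of r "e/2" y p] \<open>e > 0\<close> by force
    then obtain x where "x \<in> k" "dist x q < e/2"
      using k(2) by auto
    then show "p \<in> (\<Union>x\<in>k. ball x e)"
      using dist_triangle[of x p q] q(2) by force
  qed
  then show "\<exists>k. finite k \<and> cball y R \<subseteq> (\<Union>x\<in>k. ball x e)"
    using k(1) by blast
qed

lemma locally_compact_uniform_neighbourhood:
  fixes S :: "'a::metric_space set"
  assumes "locally_compact_metric TYPE('a)" "compact S"
  obtains \<eta> C where "\<eta> > 0" "compact C" "\<And>x. x \<in> S \<Longrightarrow> cball x \<eta> \<subseteq> C"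
proof -
  obtain \<rho> where "\<forall>p::'a. \<rho> p > 0 \<and> compact (cball p (\<rho> p))"
    using assms(1) unfolding locally_compact_metric_def by (metis choice)
  then have \<rho>: "\<And>p. \<rho> p > 0" "\<And>p. compact (cball p (\<rho> p))"
    by blast+
  have cover: "S \<subseteq> (\<Union>p\<in>S. ball p (\<rho> p / 2))"
    using \<rho>(1) by (auto intro!: bexI)
  obtain F where F: "finite F" "S \<subseteq> (\<Union>p\<in>F. ball p (\<rho> p / 2))"
    by (rule compactE_image[OF assms(2) _ cover]) auto
  define \<eta> where "\<eta> = Min (insert 1 ((\<lambda>p. \<rho> p / 2) ` F))"
  have "\<eta> > 0"
    unfolding \<eta>_def using F(1) \<rho>(1) by (simp add: Min_gr_iff)
  moreover have "compact (\<Union>p\<in>F. cball p (\<rho> p))"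
    using F(1) \<rho>(2) by (intro compact_UN) auto
  moreover have "cball x \<eta> \<subseteq> (\<Union>p\<in>F. cball p (\<rho> p))" if "x \<in> S" for x
  proof -
    obtain p where p: "p \<in> F" "dist p x < \<rho> p / 2"
      using F(2) \<open>x \<in> S\<close> by auto
    have "\<eta> \<le> \<rho> p / 2"
      unfolding \<eta>_def using F(1) p(1) by (intro Min_le) auto
    have "cball x \<eta> \<subseteq> cball p (\<rho> p)"
    proof
      fix q assume "q \<in> cball x \<eta>"
      then show "q \<in> cball p (\<rho> p)"
        using \<open>\<eta> \<le> \<rho> p / 2\<close> p(2) dist_triangle[of p q x] by simp
    qed
    then show ?thesis
      using p(1) by blast
  qed
  ultimately show ?thesis
    using that by blast
qed

lemma compact_cball_enlarge:
  fixes y :: "'a::metric_space"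
  assumes "geodesic_space TYPE('a)" "locally_compact_metric TYPE('a)"
    and "0 \<le> R" "compact (cball y R)"
  shows "\<exists>\<eta>>0. compact (cball y (R + \<eta>))"
proof -
  obtain \<eta> C where "\<eta> > 0" "compact C" and C: "\<And>x. x \<in> cball y R \<Longrightarrow> cball x \<eta> \<subseteq> C"
    using locally_compact_uniform_neighbourhood[OF assms(2,4)] by blast
  have "cball y (R + \<eta>) \<subseteq> C"
  proof
    fix q assume "q \<in> cball y (R + \<eta>)"
    then obtain p where "dist y p \<le> R" "dist p q \<le> \<eta>"
      using geodesic_space_point_between[OF assms(1), of R \<eta> y q] \<open>0 \<le> R\<close> \<open>\<eta> > 0\<close> by auto
    then show "q \<in> C"
      using C[of p] by auto
  qed
  then have "compact (C \<inter> cball y (R + \<eta>))" "C \<inter> cball y (R + \<eta>) = cball y (R + \<eta>)"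
    using \<open>compact C\<close> by (auto intro: compact_Int_closed)
  then show ?thesis
    using \<open>\<eta> > 0\<close> by auto
qed

lemma compact_cball_geodesic_locally_compact:
  fixes y :: "'a::metric_space"
  assumes "complete (UNIV :: 'a set)" "geodesic_space TYPE('a)" "locally_compact_metric TYPE('a)"
  shows "compact (cball y R)"
proof (rule ccontr)
  assume "\<not> compact (cball y R)"
  \<comment> \<open>The supremum of the radii of compact balls would be attained and then exceeded.\<close>
  define S where "S = {r. compact (cball y r)}"
  have down: "r \<in> S" if "s \<in> S" "r \<le> s" for r s
  proof -
    have "cball y r = cball y s \<inter> cball y r"
      using that(2) by auto
    then show ?thesis
      using that(1) unfolding S_def by (metis closed_cball compact_Int_closed mem_Collect_eq)
  qed
  have "bdd_above S"
    using down \<open>\<not> compact (cball y R)\<close> unfolding S_def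
    by (metis bdd_aboveI linorder_linear mem_Collect_eq)
  obtain r0 where "r0 > 0" "r0 \<in> S"
    using assms(3) unfolding locally_compact_metric_def S_def by blast
  define Rs where "Rs = Sup S"
  have "r0 \<le> Rs"
    unfolding Rs_def using \<open>r0 \<in> S\<close> \<open>bdd_above S\<close> by (rule cSup_upper)
  have "compact (cball y r)" if "r < Rs" for r
    using less_cSupE[of r S] that down \<open>r0 \<in> S\<close> unfolding Rs_def S_def
    by (metis empty_iff less_le_not_le mem_Collect_eq)
  then have "compact (cball y Rs)"
    using compact_cball_from_smaller[OF assms(1,2)] \<open>r0 > 0\<close> \<open>r0 \<le> Rs\<close> by simp
  then obtain \<eta> where "\<eta> > 0" "Rs + \<eta> \<in> S"
    using compact_cball_enlarge[OF assms(2,3), of Rs y] \<open>r0 > 0\<close> \<open>r0 \<le> Rs\<close>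
    unfolding S_def by auto
  then show False
    using cSup_upper[OF _ \<open>bdd_above S\<close>, of "Rs + \<eta>"] unfolding Rs_def by simp
qed

lemma CAT0_space_imp_complete: "CAT0_space TYPE('a::metric_space) \<Longrightarrow> complete (UNIV :: 'a set)"
  unfolding CAT0_space_def by blast

lemma CAT0_space_imp_geodesic: "CAT0_space TYPE('a::metric_space) \<Longrightarrow> geodesic_space TYPE('a)"
  unfolding CAT0_space_def by blast

lemma CAT0_comparison:
  fixes a b c :: "'a::metric_space"
  assumes "CAT0_space TYPE('a)"
    and "geodesic_segment g1 a b" "geodesic_segment g2 b c" "geodesic_segment g3 c a"
    and "dist a' b' = dist a b" "dist b' c' = dist b c" "dist c' a' = dist c a"
    and "tri_cmp a b c g1 g2 g3 a' b' c' p p'" "tri_cmp a b c g1 g2 g3 a' b' c' q q'"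
  shows "dist p q \<le> dist p' q'"
  using assms unfolding CAT0_space_def by blast

lemma isosceles_triangle_complex:
  fixes T e :: real
  assumes "0 < T" "0 \<le> e" "e \<le> 2 * T"
  shows "\<exists>c. cmod c = T \<and> cmod (complex_of_real T - c) = e"
proof -
  define a where "a = T - e\<^sup>2 / (2 * T)"
  have "e\<^sup>2 \<le> (2 * T)\<^sup>2"
    using assms by (intro power_mono) auto
  then have "e\<^sup>2 / (2 * T) \<le> 2 * T"
    using assms(1) by (simp add: field_simps power2_eq_square)
  moreover have "0 \<le> e\<^sup>2 / (2 * T)"
    using assms(1) by simp
  ultimately have "\<bar>a\<bar> \<le> T"
    unfolding a_def by linarith
  then have "a\<^sup>2 \<le> T\<^sup>2"
    using power_mono[OF \<open>\<bar>a\<bar> \<le> T\<close> abs_ge_zero, of 2] by simp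
  define b where "b = sqrt (T\<^sup>2 - a\<^sup>2)"
  have b: "b\<^sup>2 = T\<^sup>2 - a\<^sup>2"
    unfolding b_def using \<open>a\<^sup>2 \<le> T\<^sup>2\<close> by simp
  have "cmod (Complex a b) = T"
    using b assms(1) by (simp add: cmod_def)
  moreover have "(T - a)\<^sup>2 + b\<^sup>2 = e\<^sup>2"
    using b assms(1) unfolding a_def by (simp add: field_simps power2_eq_square)
  then have "cmod (complex_of_real T - Complex a b) = e"
    using assms(2) by (simp add: cmod_def)
  ultimately show ?thesis
    by blast
qed

lemma CAT0_isosceles_comparison:
  fixes y z w :: "'a::metric_space"
  assumes cat: "CAT0_space TYPE('a)"
    and g: "geodesic_segment g y z" and h: "geodesic_segment h y w"
    and same_length: "dist y w = dist y z" and "0 \<le> K" "K \<le> dist y z"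
  shows "dist (g K) (h K) \<le> K / dist y z * dist z w"
proof (cases "y = z")
  case True
  then have "K = 0"
    using assms(5,6) by simp
  then show ?thesis
    using geodesic_segmentD(1)[OF g] geodesic_segmentD(1)[OF h] by simp
next
  case False
  define T where "T = dist y z"
  have "T > 0"
    using False unfolding T_def by simp
  obtain g2 where g2: "geodesic_segment g2 z w"
    using CAT0_space_imp_geodesic[OF cat] unfolding geodesic_space_def by blast
  define g3 where "g3 = (\<lambda>s. h (dist y w - s))"
  have g3: "geodesic_segment g3 w y"
    unfolding g3_def by (rule geodesic_segment_reverse[OF h])
  have "dist z w \<le> 2 * T"
    using dist_triangle[of z w y] same_length unfolding T_def by (simp add: dist_commute)
  then obtain c where c: "cmod c = T" "cmod (complex_of_real T - c) = dist z w"
    using isosceles_triangle_complex[OF \<open>T > 0\<close> zero_le_dist] by blast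
  have sides: "dist 0 (complex_of_real T) = dist y z" "dist (complex_of_real T) c = dist z w"
    "dist c 0 = dist w y"
    using c \<open>T > 0\<close> same_length unfolding T_def by (simp_all add: dist_norm dist_commute)
  \<comment> \<open>In the comparison triangle 0, T, c the points g K and h K correspond to s T and s c.\<close>
  define s where "s = K / T"
  have "0 \<le> s" "s \<le> 1"
    unfolding s_def using assms(5,6) \<open>T > 0\<close> by (auto simp: T_def)
  have "tri_cmp y z w g g2 g3 0 (complex_of_real T) c (g K) (of_real s * of_real T)"
    unfolding tri_cmp_def using \<open>0 \<le> s\<close> \<open>s \<le> 1\<close> \<open>T > 0\<close>
    by (intro exI[of _ s]) (simp add: s_def T_def)
  moreover have "g3 ((1 - s) * dist w y) = h K"
    unfolding g3_def s_def using \<open>T > 0\<close> same_length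
    by (simp add: T_def dist_commute field_simps)
  then have "tri_cmp y z w g g2 g3 0 (complex_of_real T) c (h K) (of_real s * c)"
    unfolding tri_cmp_def using \<open>0 \<le> s\<close> \<open>s \<le> 1\<close>
    by (intro exI[of _ "1 - s"]) (auto simp: algebra_simps)
  ultimately have "dist (g K) (h K) \<le> dist (of_real s * of_real T) (of_real s * c)"
    by (rule CAT0_comparison[OF cat g g2 g3 sides])
  also have "\<dots> = s * dist z w"
    using c(2) \<open>0 \<le> s\<close> by (simp add: dist_norm norm_mult flip: right_diff_distrib)
  finally show ?thesis
    unfolding s_def T_def .
qed

lemma CAT0_rays_dist_mono:
  fixes c c' :: "real \<Rightarrow> 'a::metric_space"
  assumes "CAT0_space TYPE('a)" "geodesic_ray c" "geodesic_ray c'" "c' 0 = c 0"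
    and "0 \<le> K" "K \<le> T"
  shows "dist (c K) (c' K) \<le> dist (c T) (c' T)"
proof -
  have T: "dist (c 0) (c T) = T" "dist (c 0) (c' T) = T"
    using geodesic_ray_dist[OF assms(2), of 0 T] geodesic_ray_dist[OF assms(3), of 0 T] assms
    by simp_all
  have "geodesic_segment c (c 0) (c T)" "geodesic_segment c' (c 0) (c' T)"
    using geodesic_ray_imp_segment[OF assms(2)] geodesic_ray_imp_segment[OF assms(3)] assms(4,5,6)
    by fastforce+
  then have "dist (c K) (c' K) \<le> K / T * dist (c T) (c' T)"
    using CAT0_isosceles_comparison[OF assms(1), of c "c 0" "c T" c' "c' T" K] T assms(5,6)
    by simp
  also have "\<dots> \<le> dist (c T) (c' T)"
    using assms(5,6) by (intro mult_left_le_one_le) (auto simp: divide_le_eq_1)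
  finally show ?thesis .
qed

lemma compact_approx_zero_set:
  fixes f :: "'a::metric_space \<Rightarrow> real"
  assumes "compact S" "continuous_on S f" "\<And>w. w \<in> S \<Longrightarrow> 0 \<le> f w" "\<epsilon> > 0"
  shows "\<exists>\<delta>>0. \<forall>w\<in>S. f w < \<delta> \<longrightarrow> (\<exists>z\<in>S. f z = 0 \<and> dist z w < \<epsilon>)"
proof -
  define R where "R = S - (\<Union>z\<in>{z\<in>S. f z = 0}. ball z \<epsilon>)"
  have "compact R"
    unfolding R_def using assms(1) by (intro compact_diff) auto
  show ?thesis
  proof (cases "R = {}")
    case True
    then show ?thesis
      unfolding R_def by (intro exI[of _ 1]) (fastforce simp: subset_eq)
  next
    case False
    obtain m where m: "m \<in> R" "\<And>w. w \<in> R \<Longrightarrow> f m \<le> f w"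
      using continuous_attains_inf[OF \<open>compact R\<close> False continuous_on_subset[OF assms(2)]]
      unfolding R_def by blast
    have "f m \<noteq> 0"
      using m(1) \<open>\<epsilon> > 0\<close> unfolding R_def by auto
    then have "f m > 0"
      using m(1) assms(3) unfolding R_def by force
    moreover have "\<exists>z\<in>S. f z = 0 \<and> dist z w < \<epsilon>" if "w \<in> S" "f w < f m" for w
      using m(2)[of w] that unfolding R_def by force
    ultimately show ?thesis
      by blast
  qed
qed

lemma geodesic_ray_class:
  assumes "geodesic_ray c"
  shows "ray_class c \<in> boundary_at_infinity" "ray_from_to (c 0) (ray_class c) c"
proof -
  have "asymptotic c c"
    unfolding asymptotic_def by auto
  then show "ray_class c \<in> boundary_at_infinity" "ray_from_to (c 0) (ray_class c) c"
    using assms unfolding boundary_at_infinity_def ray_from_to_def ray_class_def by auto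
qed

lemma boundary_shadow_obtain_ray:
  assumes "\<zeta> \<in> boundary_shadow y x"
  obtains c where "\<zeta> \<in> boundary_at_infinity" "ray_from_to y \<zeta> c"
    "\<And>t. 0 \<le> t \<Longrightarrow> dist y (c t) = t" "\<And>t. dist y x \<le> t \<Longrightarrow> dist x (c t) = t - dist y x"
proof -
  obtain c t where c: "\<zeta> \<in> boundary_at_infinity" "ray_from_to y \<zeta> c" "0 \<le> t" "c t = x"
    using assms unfolding boundary_shadow_def by blast
  then have ray: "geodesic_ray c" "c 0 = y"
    unfolding ray_from_to_def by auto
  then have "dist y x = t"
    using geodesic_ray_dist[OF ray(1), of 0 t] c(3,4) by simp
  show ?thesis
  proof (rule that[OF c(1,2)])
    fix s :: real assume "0 \<le> s"
    then show "dist y (c s) = s"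
      using geodesic_ray_dist[OF ray(1), of 0 s] ray(2) by simp
  next
    fix s :: real assume "dist y x \<le> s"
    then show "dist x (c s) = s - dist y x"
      using geodesic_ray_dist[OF ray(1), of t s] c(3,4) \<open>dist y x = t\<close> by simp
  qed
qed

lemma boundary_shadow_geodesic_extension:
  fixes x y z :: "'a::metric_space"
  assumes "geodesic_space TYPE('a)" "geodesically_complete TYPE('a)" "y \<noteq> z"
    and "dist y z = dist y x + dist x z"
  obtains L where "geodesic_ray L" "L 0 = y" "L (dist y z) = z" "ray_class L \<in> boundary_shadow y x"
proof -
  obtain g h where g: "geodesic_segment g y x" and h: "geodesic_segment h x z"
    using assms(1) unfolding geodesic_space_def by blast
  define G where "G t = (if t \<le> dist y x then g t else h (t - dist y x))" for t
  have G: "geodesic_segment G y z"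
    unfolding G_def using geodesic_segment_append[OF g h assms(4)] .
  then obtain L where "geodesic_line L" and L: "\<And>t. 0 \<le> t \<Longrightarrow> t \<le> dist y z \<Longrightarrow> L t = G t"
    using assms(2,3) unfolding geodesically_complete_def by blast
  then have ray: "geodesic_ray L"
    unfolding geodesic_line_def geodesic_ray_def by blast
  have "L 0 = y" "L (dist y z) = z"
    using L geodesic_segmentD(1,2)[OF G] by simp_all
  moreover have "L (dist y x) = x"
    using L[of "dist y x"] geodesic_segmentD(2)[OF g] assms(4) unfolding G_def by simp
  moreover have "ray_class L \<in> boundary_shadow y x"
    using geodesic_ray_class[OF ray] \<open>L 0 = y\<close> \<open>L (dist y x) = x\<close>
    unfolding boundary_shadow_def by (auto intro!: exI[of _ L] exI[of _ "dist y x"])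
  ultimately show ?thesis
    using that ray by blast
qed

lemma sphere_near_geodesic_approx:
  fixes x y :: "'a::metric_space"
  assumes "complete (UNIV :: 'a set)" "geodesic_space TYPE('a)" "locally_compact_metric TYPE('a)"
    and "\<epsilon> > 0"
  shows "\<exists>\<delta>>0. \<forall>w. dist y w = T \<and> dist y x + dist x w < T + \<delta> \<longrightarrow>
           (\<exists>z. dist y z = T \<and> dist y z = dist y x + dist x z \<and> dist z w < \<epsilon>)"
proof -
  define f where "f w = dist y x + dist x w - T" for w
  have "compact (sphere y T)"
    using compact_diff[OF compact_cball_geodesic_locally_compact[OF assms(1-3)] open_ball, of y T y T]
    by (simp only: cball_diff_eq_sphere)
  moreover have "continuous_on (sphere y T) f"
    unfolding f_def by (intro continuous_intros)
  moreover have "0 \<le> f w" if "w \<in> sphere y T" for w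
    using that dist_triangle[of y w x] unfolding f_def by simp
  ultimately obtain \<delta> where "\<delta> > 0" and \<delta>:
    "\<forall>w\<in>sphere y T. f w < \<delta> \<longrightarrow> (\<exists>z\<in>sphere y T. f z = 0 \<and> dist z w < \<epsilon>)"
    using compact_approx_zero_set[of "sphere y T" f \<epsilon>] \<open>\<epsilon> > 0\<close> by blast
  show ?thesis
  proof (intro exI[of _ \<delta>] conjI allI impI \<open>\<delta> > 0\<close>)
    fix w assume "dist y w = T \<and> dist y x + dist x w < T + \<delta>"
    then have "w \<in> sphere y T" "f w < \<delta>"
      unfolding f_def by auto
    then show "\<exists>z. dist y z = T \<and> dist y z = dist y x + dist x z \<and> dist z w < \<epsilon>"
      using \<delta> unfolding f_def by fastforce
  qed
qed

lemma ray_nbhd_boundary_shadow_intro: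
  fixes x y z :: "'a::metric_space"
  assumes "CAT0_space TYPE('a)" "geodesically_complete TYPE('a)"
    and "\<zeta> \<in> boundary_at_infinity" "ray_from_to y \<zeta> c"
    and "dist y z = T" "dist y z = dist y x + dist x z" "dist z (c T) < \<epsilon>"
    and "0 < K" "K \<le> T"
  shows "\<zeta> \<in> ray_nbhd y K \<epsilon> (boundary_shadow y x)"
proof -
  have "y \<noteq> z"
    using assms(5,8,9) by auto
  obtain L where L: "geodesic_ray L" "L 0 = y" "L (dist y z) = z" "ray_class L \<in> boundary_shadow y x"
    using boundary_shadow_geodesic_extension[OF CAT0_space_imp_geodesic[OF assms(1)] assms(2)
        \<open>y \<noteq> z\<close> assms(6)] by blast
  have c: "geodesic_ray c" "c 0 = y"
    using assms(4) unfolding ray_from_to_def by auto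
  have "dist (L K) (c K) < \<epsilon>"
    using CAT0_rays_dist_mono[OF assms(1) L(1) c(1), of K T] L(2,3) c(2) assms(5,7-9) by simp
  then show ?thesis
    using geodesic_ray_class(2)[OF L(1)] L(2,4) assms(3,4) unfolding ray_nbhd_def by auto
qed

theorem corollary4:
  fixes x0 y :: "'a::metric_space"
  assumes "CAT0_space TYPE('a)"
    and "locally_compact_metric TYPE('a)"
    and "geodesically_complete TYPE('a)"
    and "connected_at_infinity TYPE('a)"
    and "y \<noteq> x0"
  shows "\<forall>K>0. \<forall>\<epsilon>>0. \<exists>\<delta>>0. \<forall>x1. dist x0 x1 < \<delta> \<and> dist y x1 = dist y x0 \<longrightarrow>
           boundary_shadow y x1 \<subseteq> ray_nbhd y K \<epsilon> (boundary_shadow y x0)"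
proof (intro allI impI)
  fix K \<epsilon> :: real assume "K > 0" "\<epsilon> > 0"
  define T where "T = K + dist y x0"
  obtain \<delta> where "\<delta> > 0" and \<delta>: "\<forall>w. dist y w = T \<and> dist y x0 + dist x0 w < T + \<delta> \<longrightarrow>
      (\<exists>z. dist y z = T \<and> dist y z = dist y x0 + dist x0 z \<and> dist z w < \<epsilon>)"
    using sphere_near_geodesic_approx[OF CAT0_space_imp_complete[OF assms(1)]
        CAT0_space_imp_geodesic[OF assms(1)] assms(2) \<open>\<epsilon> > 0\<close>] by blast
  show "\<exists>\<delta>>0. \<forall>x1. dist x0 x1 < \<delta> \<and> dist y x1 = dist y x0 \<longrightarrow>
      boundary_shadow y x1 \<subseteq> ray_nbhd y K \<epsilon> (boundary_shadow y x0)"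
  proof (intro exI[of _ \<delta>] conjI allI impI subsetI \<open>\<delta> > 0\<close>)
    fix x1 \<zeta> assume x1: "dist x0 x1 < \<delta> \<and> dist y x1 = dist y x0" and "\<zeta> \<in> boundary_shadow y x1"
    then obtain c where c: "\<zeta> \<in> boundary_at_infinity" "ray_from_to y \<zeta> c"
      "dist y (c T) = T" "dist x1 (c T) = K"
      using \<open>K > 0\<close> unfolding T_def by (elim boundary_shadow_obtain_ray) auto
    then obtain z where z: "dist y z = T" "dist y z = dist y x0 + dist x0 z" "dist z (c T) < \<epsilon>"
      using \<delta> x1 dist_triangle[of x0 "c T" x1] unfolding T_def by fastforce
    then show "\<zeta> \<in> ray_nbhd y K \<epsilon> (boundary_shadow y x0)"
      using ray_nbhd_boundary_shadow_intro[OF assms(1,3) c(1,2) z \<open>K > 0\<close>] unfolding T_def by simp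
  qed
qed

end
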